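(* Let $X=\{X_t\}_{t\ge0}$ be a continuous-time random walk on $\mathbb{Z}^d$ started at the origin, and let $\bm{p}_t(w)=\mathrm{P}\{X_t=w\}$ for $t\ge0$, $w\in\mathbb{Z}^d$. Then for all $t,s\ge0$ and $x,z\in\mathbb{Z}^d$, \[\sum_{y\in\mathbb{Z}^d}[\bm{p}_t(x-y)\bm{p}_s(y-z)]^2\le[\bm{p}_{t+s}(x-z)]^2.\] *)

theory Defs
  imports "HOL-Analysis.Analysis" "HOL-Probability.Probability"
begin

text \<open>Law of the number of jumps up to time t of a Poisson clock of rate lam:
  Poisson(lam*t), with Poisson(0) the point mass at 0.\<close>
definition jump_count_law :: "real \<Rightarrow> real \<Rightarrow> nat pmf" where
  "jump_count_law lam t = (if 0 < lam * t then poisson_pmf (lam * t) else return_pmf 0)"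

fun jump_sum_law :: "('a::{zero,plus}) pmf \<Rightarrow> nat \<Rightarrow> 'a pmf" where
  "jump_sum_law mu 0 = return_pmf 0"
| "jump_sum_law mu (Suc n) = map_pmf (\<lambda>(a, b). a + b) (pair_pmf mu (jump_sum_law mu n))"

text \<open>Law of X_t for the continuous-time random walk on Z^d started at the origin,
  with jump rate lam and jump distribution mu: X_t = xi_1 + ... + xi_{N_t}.\<close>
definition crw_law :: "real \<Rightarrow> (int ^ 'd) pmf \<Rightarrow> real \<Rightarrow> (int ^ 'd) pmf" where
  "crw_law lam mu t = bind_pmf (jump_count_law lam t) (jump_sum_law mu)"

definition crw_p :: "real \<Rightarrow> (int ^ 'd) pmf \<Rightarrow> real \<Rightarrow> int ^ 'd \<Rightarrow> real" where
  "crw_p lam mu t w = pmf (crw_law lam mu t) w"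

end

theory Submission imports Defs begin

text \<open>The Poisson clock makes the laws of the walk a convolution semigroup:
  the law at time t + s is the convolution of the laws at times t and s, so
  p_{t+s}(x - z) is the sum over y of the nonnegative terms a_y = p_t(x - y) p_s(y - z).
  Each a_y is bounded by this sum, hence the sum of the a_y^2 is at most its square.\<close>

lemma has_sum_pmf_measure: "(pmf p has_sum measure p A) A"
proof -
  have "pmf p summable_on A"
    using pmf_abs_summable abs_summable_equivalent by (blast intro: abs_summable_summable)
  moreover have "measure p A = (\<Sum>\<^sub>\<infinity>x\<in>A. pmf p x)"
    by (simp add: measure_pmf_conv_infsetsum infsetsum_infsum pmf_abs_summable)
  ultimately show ?thesis
    by (simp add: has_sum_infsum)
qed

definition conv_pmf :: "('a::plus) pmf \<Rightarrow> 'a pmf \<Rightarrow> 'a pmf" where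
  "conv_pmf A B = map_pmf (\<lambda>(a, b). a + b) (pair_pmf A B)"

lemma bind_conv_pmf:
  "bind_pmf (conv_pmf A B) F = bind_pmf A (\<lambda>a. bind_pmf B (\<lambda>b. F (a + b)))"
  by (simp add: conv_pmf_def pair_pmf_def bind_map_pmf bind_assoc_pmf bind_return_pmf)

lemma conv_pmf_bind_pmf:
  "conv_pmf (bind_pmf M F) (bind_pmf N G)
     = bind_pmf M (\<lambda>m. bind_pmf N (\<lambda>n. conv_pmf (F m) (G n)))"
proof -
  have "conv_pmf (bind_pmf M F) (bind_pmf N G)
      = bind_pmf M (\<lambda>m. bind_pmf (F m) (\<lambda>a. bind_pmf N (\<lambda>n. bind_pmf (G n) (\<lambda>b. return_pmf (a + b)))))"
    by (simp add: conv_pmf_def pair_pmf_def map_pmf_def bind_assoc_pmf bind_return_pmf)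
  also have "\<dots> = bind_pmf M (\<lambda>m. bind_pmf N (\<lambda>n. bind_pmf (F m) (\<lambda>a. bind_pmf (G n) (\<lambda>b. return_pmf (a + b)))))"
    by (subst bind_commute_pmf) (rule refl)
  also have "\<dots> = bind_pmf M (\<lambda>m. bind_pmf N (\<lambda>n. conv_pmf (F m) (G n)))"
    by (simp add: conv_pmf_def pair_pmf_def map_pmf_def bind_assoc_pmf bind_return_pmf)
  finally show ?thesis .
qed

lemma pmf_conv_pmf_nat:
  fixes A B :: "nat pmf"
  shows "pmf (conv_pmf A B) k = (\<Sum>i\<le>k. pmf A i * pmf B (k - i))"
proof -
  have fiber: "(\<lambda>(m, n). m + n) -` {k} = (\<lambda>i. (i, k - i)) ` {..k}"
    by (auto simp: image_iff)
  have "inj_on (\<lambda>i. (i, k - i)) {..k}"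
    by (auto simp: inj_on_def)
  then show ?thesis
    unfolding conv_pmf_def pmf_map fiber
    by (subst measure_measure_pmf_finite) (auto simp: sum.reindex pmf_pair)
qed

lemma has_sum_pmf_conv_pmf:
  fixes A B :: "('a::ab_group_add) pmf"
  shows "((\<lambda>y. pmf A (x - y) * pmf B (y - z)) has_sum pmf (conv_pmf A B) (x - z)) UNIV"
proof -
  let ?h = "\<lambda>y. (x - y, y - z)"
  have fiber: "(\<lambda>(a, b). a + b) -` {x - z} = range ?h"
  proof (auto simp: image_iff)
    fix a b assume "a + b = x - z"
    then show "\<exists>y. a = x - y \<and> b = y - z"
      by (intro exI[of _ "x - a"]) (auto simp: algebra_simps)
  qed
  have inj: "inj ?h"
    by (auto simp: inj_on_def)
  have "(pmf (pair_pmf A B) has_sum measure (pair_pmf A B) (range ?h)) (range ?h)"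
    by (rule has_sum_pmf_measure)
  then show ?thesis
    unfolding conv_pmf_def pmf_map fiber has_sum_reindex[OF inj]
    by (simp add: o_def pmf_pair)
qed

lemma has_sum_square_le_square:
  fixes f :: "'a \<Rightarrow> real"
  assumes sum: "(f has_sum S) A" and nonneg: "\<And>y. y \<in> A \<Longrightarrow> 0 \<le> f y"
  shows "(\<lambda>y. (f y)^2) summable_on A \<and> (\<Sum>\<^sub>\<infinity>y\<in>A. (f y)^2) \<le> S^2"
proof -
  have bound: "f y \<le> S" if "y \<in> A" for y
  proof -
    have "(f has_sum f y) {y}"
      using has_sum_finite[of "{y}" f] by simp
    from this sum show ?thesis
      by (rule has_sum_mono_neutral) (use that nonneg in auto)
  qed
  have square_le: "(f y)^2 \<le> f y * S" if "y \<in> A" for y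
    using bound[OF that] nonneg[OF that] by (simp add: power2_eq_square mult_left_mono)
  have scaled: "((\<lambda>y. f y * S) has_sum S * S) A"
    using has_sum_cmult_left[OF sum, of S] by (simp add: mult.commute)
  have summable: "(\<lambda>y. (f y)^2) summable_on A"
    using scaled by (rule summable_on_comparison_test[OF has_sum_imp_summable]) (auto simp: square_le)
  have "(\<Sum>\<^sub>\<infinity>y\<in>A. (f y)^2) \<le> S * S"
    using has_sum_infsum[OF summable] scaled square_le by (rule has_sum_mono)
  with summable show ?thesis
    by (simp add: power2_eq_square)
qed

lemma poisson_weights_convolution:
  fixes a b :: real
  shows "(\<Sum>i\<le>k. a^i / fact i * exp (-a) * (b^(k - i) / fact (k - i) * exp (-b)))
      = (a + b)^k / fact k * exp (-(a + b))"
proof -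
  have binomial: "(a + b)^k / fact k = (\<Sum>i\<le>k. a^i / fact i * (b^(k - i) / fact (k - i)))"
    unfolding binomial_ring sum_divide_distrib
    by (rule sum.cong) (auto simp: binomial_fact field_simps)
  have "(\<Sum>i\<le>k. a^i / fact i * exp (-a) * (b^(k - i) / fact (k - i) * exp (-b)))
      = (\<Sum>i\<le>k. a^i / fact i * (b^(k - i) / fact (k - i))) * (exp (-a) * exp (-b))"
    unfolding sum_distrib_right by (rule sum.cong) auto
  also have "\<dots> = (a + b)^k / fact k * exp (-(a + b))"
    by (simp add: binomial exp_add[symmetric])
  finally show ?thesis .
qed

lemma pmf_jump_count_law:
  assumes "0 \<le> lam * t"
  shows "pmf (jump_count_law lam t) n = (lam * t)^n / fact n * exp (-(lam * t))"
  using assms by (cases "lam * t = 0"; cases n) (auto simp: jump_count_law_def indicator_def)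

lemma jump_count_law_add:
  assumes "0 \<le> lam" "0 \<le> t" "0 \<le> s"
  shows "jump_count_law lam (t + s) = conv_pmf (jump_count_law lam t) (jump_count_law lam s)"
proof (rule pmf_eqI)
  fix k
  show "pmf (jump_count_law lam (t + s)) k = pmf (conv_pmf (jump_count_law lam t) (jump_count_law lam s)) k"
    using assms poisson_weights_convolution[of "lam * t" "lam * s" k]
    by (simp add: pmf_conv_pmf_nat pmf_jump_count_law distrib_left)
qed

lemma jump_sum_law_add:
  fixes mu :: "('a::comm_monoid_add) pmf"
  shows "jump_sum_law mu (m + n) = conv_pmf (jump_sum_law mu m) (jump_sum_law mu n)"
proof (induction m)
  case 0
  then show ?case
    by (simp add: conv_pmf_def pair_return_pmf1 pmf.map_comp o_def)
next
  case (Suc m)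
  then show ?case
    by (simp add: conv_pmf_def pair_pmf_def map_pmf_def bind_assoc_pmf bind_return_pmf add.assoc)
qed

lemma crw_law_add:
  assumes "0 \<le> lam" "0 \<le> t" "0 \<le> s"
  shows "crw_law lam mu (t + s) = conv_pmf (crw_law lam mu t) (crw_law lam mu s)"
  unfolding crw_law_def jump_count_law_add[OF assms] bind_conv_pmf conv_pmf_bind_pmf
  by (simp add: jump_sum_law_add)

theorem lemma3p3:
  fixes lam :: real and mu :: "(int ^ 'd::finite) pmf"
    and t s :: real and x z :: "int ^ 'd"
  assumes "0 < lam" and "0 \<le> t" and "0 \<le> s"
  shows "(\<lambda>y. (crw_p lam mu t (x - y) * crw_p lam mu s (y - z))^2) summable_on UNIV
       \<and> (\<Sum>\<^sub>\<infinity>y. (crw_p lam mu t (x - y) * crw_p lam mu s (y - z))^2)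
           \<le> (crw_p lam mu (t + s) (x - z))^2"
proof -
  have "((\<lambda>y. crw_p lam mu t (x - y) * crw_p lam mu s (y - z))
          has_sum crw_p lam mu (t + s) (x - z)) UNIV"
    unfolding crw_p_def crw_law_add[OF less_imp_le[OF assms(1)] assms(2,3)]
    by (rule has_sum_pmf_conv_pmf)
  then show ?thesis
    by (rule has_sum_square_le_square) (simp add: crw_p_def)
qed

end
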